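(* Let $P$ be a codirected poset and $M\colon P\to\mathbf{Vec}$ a pointwise finite-dimensional persistence module with $M_p\neq 0$ for all $p\in P$ and such that $M(p\le q)\colon M_p\to M_q$ is injective for all $p\le q$. Then there is a monomorphism $k_P\hookrightarrow M$. If moreover $P$ is directed, then $M$ has a direct summand isomorphic to $k_P$.
   Context: $P$ is codirected if for all $p,q\in P$ there is $c\in P$ with $c\le p,q$; directed if for all $p,q$ there is $c$ with $p,q\le c$. Persistence modules over $P$ are functors $P\to\mathbf{Vec}$ with structure maps $M(p\le q)$. $k_P$ is the module with $k$ at every point and identity structure maps. A monomorphism is a pointwise injective morphism. *)

theory Defs
  imports Main "HOL.Vector_Spaces"
begin

text \<open>Vector spaces over a field 'k are modelled as subspaces V of an ambient
 vector space 'v with scalar multiplication s (locale vector_space).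
 A persistence module over the poset 'p is a family of subspaces V p together
 with structure maps f p q (only their behaviour on V p matters).\<close>

definition lin_on :: "('k \<Rightarrow> 'v::plus \<Rightarrow> 'v) \<Rightarrow> ('k \<Rightarrow> 'w::plus \<Rightarrow> 'w) \<Rightarrow> 'v set
    \<Rightarrow> ('v \<Rightarrow> 'w) \<Rightarrow> bool" where
  "lin_on s1 s2 A h \<longleftrightarrow>
     (\<forall>x\<in>A. \<forall>y\<in>A. h (x + y) = h x + h y) \<and> (\<forall>c. \<forall>x\<in>A. h (s1 c x) = s2 c (h x))"

definition pmod :: "('k::field \<Rightarrow> 'v::ab_group_add \<Rightarrow> 'v) \<Rightarrow> ('p::order \<Rightarrow> 'v set)
    \<Rightarrow> ('p \<Rightarrow> 'p \<Rightarrow> 'v \<Rightarrow> 'v) \<Rightarrow> bool" where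
  "pmod s V f \<longleftrightarrow> vector_space s \<and> (\<forall>p. module.subspace s (V p))
     \<and> (\<forall>p q. p \<le> q \<longrightarrow> lin_on s s (V p) (f p q) \<and> f p q ` V p \<subseteq> V q)
     \<and> (\<forall>p. \<forall>x\<in>V p. f p p x = x)
     \<and> (\<forall>p q r. p \<le> q \<longrightarrow> q \<le> r \<longrightarrow> (\<forall>x\<in>V p. f q r (f p q x) = f p r x))"

definition pfd :: "('k::field \<Rightarrow> 'v::ab_group_add \<Rightarrow> 'v) \<Rightarrow> ('p \<Rightarrow> 'v set) \<Rightarrow> bool" where
  "pfd s V \<longleftrightarrow> (\<forall>p. \<exists>B. finite B \<and> B \<subseteq> V p \<and> module.span s B = V p)"

definition pmor :: "('k::field \<Rightarrow> 'v::ab_group_add \<Rightarrow> 'v) \<Rightarrow> ('p::order \<Rightarrow> 'v set)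
    \<Rightarrow> ('p \<Rightarrow> 'p \<Rightarrow> 'v \<Rightarrow> 'v) \<Rightarrow> ('k \<Rightarrow> 'w::ab_group_add \<Rightarrow> 'w) \<Rightarrow> ('p \<Rightarrow> 'w set)
    \<Rightarrow> ('p \<Rightarrow> 'p \<Rightarrow> 'w \<Rightarrow> 'w) \<Rightarrow> ('p \<Rightarrow> 'v \<Rightarrow> 'w) \<Rightarrow> bool" where
  "pmor s1 V1 f1 s2 V2 f2 \<eta> \<longleftrightarrow>
     (\<forall>p. lin_on s1 s2 (V1 p) (\<eta> p) \<and> \<eta> p ` V1 p \<subseteq> V2 p)
     \<and> (\<forall>p q. p \<le> q \<longrightarrow> (\<forall>x\<in>V1 p. \<eta> q (f1 p q x) = f2 p q (\<eta> p x)))"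

definition pmono where
  "pmono s1 V1 f1 s2 V2 f2 \<eta> \<longleftrightarrow>
     pmor s1 V1 f1 s2 V2 f2 \<eta> \<and> (\<forall>p. inj_on (\<eta> p) (V1 p))"

definition kP_space :: "'p \<Rightarrow> 'k::field set" where "kP_space p = UNIV"
definition kP_map :: "'p \<Rightarrow> 'p \<Rightarrow> 'k::field \<Rightarrow> 'k" where "kP_map p q = id"

definition piso where
  "piso s1 V1 f1 s2 V2 f2 \<eta> \<longleftrightarrow>
     pmor s1 V1 f1 s2 V2 f2 \<eta> \<and> (\<forall>p. bij_betw (\<eta> p) (V1 p) (V2 p))"

definition psubmod where
  "psubmod s V f L \<longleftrightarrow> (\<forall>p. module.subspace s (L p) \<and> L p \<subseteq> V p)
     \<and> (\<forall>p q. p \<le> q \<longrightarrow> f p q ` L p \<subseteq> L q)"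

definition pdirect_summand where
  "pdirect_summand s V f L \<longleftrightarrow> psubmod s V f L \<and>
     (\<exists>N. psubmod s V f N \<and> (\<forall>p. L p \<inter> N p = {0} \<and> {x + y |x y. x \<in> L p \<and> y \<in> N p} = V p))"

definition codirected :: "'p::order itself \<Rightarrow> bool" where
  "codirected _ \<longleftrightarrow> (\<forall>p q::'p. \<exists>c. c \<le> p \<and> c \<le> q)"

definition directed :: "'p::order itself \<Rightarrow> bool" where
  "directed _ \<longleftrightarrow> (\<forall>p q::'p. \<exists>c. p \<le> c \<and> q \<le> c)"

end

theory Submission
  imports Defs
begin

text \<open>Choose \<open>p\<^sub>0\<close> with \<open>dim M\<^sub>p\<^sub>0\<close> minimal. For \<open>c \<le> p\<^sub>0\<close> the injective map
  \<open>M\<^sub>c \<rightarrow> M\<^sub>p\<^sub>0\<close> is then onto, so a nonzero \<open>v \<in> M\<^sub>p\<^sub>0\<close> has a unique preimage in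
  every \<open>M\<^sub>c\<close>, and by codirectedness the images of these preimages glue to a compatible
  family of nonzero vectors \<open>x\<^sub>p\<close>, i.e. a monomorphism \<open>k\<^sub>P \<rightarrow> M\<close>.
  If \<open>P\<close> is also directed, take by Zorn's lemma a submodule \<open>N\<close> maximal among those meeting
  the line spanned by \<open>x\<close> trivially. For \<open>y \<in> M\<^sub>p\<close>, directedness leaves at most one scalar
  \<open>b\<close> with \<open>y + b x\<^sub>p\<close> eventually in \<open>N\<close>; after shifting \<open>y\<close> by it, the submodule generated
  by \<open>N\<close> and \<open>y\<close> still meets the line trivially, so \<open>y\<close> lies in \<open>k x\<^sub>p + N\<^sub>p\<close> by maximality.\<close>

context module begin

lemma subspace_chain_Union:
  assumes "C \<noteq> {}" and "\<And>S. S \<in> C \<Longrightarrow> subspace S"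
    and "\<And>S T. S \<in> C \<Longrightarrow> T \<in> C \<Longrightarrow> S \<subseteq> T \<or> T \<subseteq> S"
  shows "subspace (\<Union>C)"
  unfolding subspace_def
proof (intro conjI ballI allI)
  show "0 \<in> \<Union>C" using assms(1,2) subspace_0 by blast
next
  fix u w assume "u \<in> \<Union>C" "w \<in> \<Union>C"
  then obtain S T where "S \<in> C" "T \<in> C" "u \<in> S" "w \<in> T" by blast
  then show "u + w \<in> \<Union>C" using assms(2) assms(3)[of S T] subspace_add by blast
next
  fix c u assume "u \<in> \<Union>C"
  then show "c *s u \<in> \<Union>C" using assms(2) subspace_scale by blast
qed

end

context vector_space begin

lemma lin_on_zero: "lin_on scale scale U h \<Longrightarrow> 0 \<in> U \<Longrightarrow> h 0 = 0"
  unfolding lin_on_def by (metis add_cancel_right_right add_0)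

lemma lin_on_extends_to_linear:
  assumes "subspace U" and "lin_on scale scale U h"
  obtains g where "Vector_Spaces.linear scale scale g" and "\<And>x. x \<in> U \<Longrightarrow> g x = h x"
proof -
  obtain B where B: "B \<subseteq> U" "independent B" "U \<subseteq> span B" "card B = dim U"
    by (rule basis_exists)
  obtain g where g: "Vector_Spaces.linear scale scale g" "\<And>x. x \<in> B \<Longrightarrow> g x = h x"
    using vector_space_pair.linear_independent_extend[of scale scale B h] B(2)
    by (auto simp: vector_space_pair_def vector_space_axioms)
  interpret g: linear scale scale g by fact
  have "h (x + y) = h x + h y" if "x \<in> U" "y \<in> U" for x y
    using assms(2) that unfolding lin_on_def by blast
  moreover have "h (c *s x) = c *s h x" if "x \<in> U" for c x
    using assms(2) that unfolding lin_on_def by blast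
  ultimately have "subspace {x \<in> U. g x = h x}"
    unfolding subspace_def
    using assms(1) lin_on_zero[OF assms(2)]
    by (simp add: subspace_0 subspace_add subspace_scale g.add g.scale)
  then have "span B \<subseteq> {x \<in> U. g x = h x}"
    using B(1) g(2) by (intro span_minimal) auto
  then show thesis using B(3) by (intro that[OF g(1)]) blast
qed

lemma dim_image_inj_on:
  assumes "subspace U" and "lin_on scale scale U h" and "inj_on h U"
  shows "dim (h ` U) = dim U"
proof -
  obtain g where g: "Vector_Spaces.linear scale scale g" and gh: "\<And>x. x \<in> U \<Longrightarrow> g x = h x"
    using lin_on_extends_to_linear[OF assms(1,2)] by blast
  interpret g: linear scale scale g by (fact g)
  obtain B where B: "B \<subseteq> U" "independent B" "U \<subseteq> span B" "card B = dim U"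
    by (rule basis_exists)
  have U: "span B = U" using B(1,3) assms(1) by (rule span_subspace)
  have "inj_on g U" using assms(3) gh by (simp add: inj_on_def)
  then have inj: "inj_on g (span B)" by (simp only: U)
  have "h ` U = g ` span B" using image_cong[OF U gh] by simp
  also have "\<dots> = span (g ` B)" by (rule g.span_image[symmetric])
  finally have "dim (h ` U) = dim (g ` B)" by simp
  also have "\<dots> = card (g ` B)"
    using g.independent_injective_image[OF B(2) inj] by (rule dim_eq_card_independent)
  also have "\<dots> = card B" using inj_on_subset[OF inj span_superset] by (rule card_image)
  finally show ?thesis using B(4) by simp
qed

lemma subspace_eq_if_dim_le:
  assumes "subspace S" and "S \<subseteq> T" and "finite F" and "T \<subseteq> span F" and "dim T \<le> dim S"
  shows "S = T"
proof (rule ccontr)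
  assume "S \<noteq> T"
  then obtain w where w: "w \<in> T" "w \<notin> S" using assms(2) by blast
  obtain B where B: "B \<subseteq> S" "independent B" "S \<subseteq> span B" "card B = dim S"
    by (rule basis_exists)
  obtain BT where BT: "BT \<subseteq> T" "independent BT" "T \<subseteq> span BT" "card BT = dim T"
    by (rule basis_exists)
  have "finite BT" using independent_span_bound[OF assms(3) BT(2)] BT(1) assms(4) by blast
  have "span B = S" using B assms(1) by (simp add: span_subspace)
  then have "independent (insert w B)" using w(2) B(2) independent_insertI by blast
  moreover have "insert w B \<subseteq> span BT" using w(1) B(1) assms(2) BT(3) by blast
  ultimately have "finite (insert w B) \<and> card (insert w B) \<le> card BT"
    by (rule independent_span_bound[OF \<open>finite BT\<close>])
  moreover have "w \<notin> B" using w(2) B(1) by blast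
  ultimately show False using B(4) BT(4) assms(5) by (auto simp: card_insert_disjoint)
qed

lemma lin_on_inj_imp_surj:
  assumes "subspace U" and "lin_on scale scale U h" and "inj_on h U" and "h ` U \<subseteq> W"
    and "finite F" and "W \<subseteq> span F" and "dim W \<le> dim U"
  shows "h ` U = W"
proof -
  obtain g where g: "Vector_Spaces.linear scale scale g" and gh: "\<And>x. x \<in> U \<Longrightarrow> g x = h x"
    using lin_on_extends_to_linear[OF assms(1,2)] by blast
  interpret g: linear scale scale g by (fact g)
  have "g ` U = h ` U" by (rule image_cong) (simp_all add: gh)
  then have "subspace (h ` U)" using g.subspace_image[OF assms(1)] by simp
  moreover have "dim W \<le> dim (h ` U)" using assms(7) dim_image_inj_on[OF assms(1-3)] by simp
  ultimately show ?thesis using subspace_eq_if_dim_le assms(4-6) by blast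
qed

lemma span_insert_meets_line_trivially:
  assumes "subspace N" and line: "\<And>b. b *s u \<in> N \<Longrightarrow> b = 0"
    and shifted: "\<And>b. z + b *s u \<in> N \<Longrightarrow> b = 0" and "b *s u \<in> span (insert z N)"
  shows "b = 0"
proof -
  have "span N = N" using assms(1) by simp
  then obtain k where k: "b *s u - k *s z \<in> N"
    using assms(4) span_breakdown_eq by metis
  show ?thesis
  proof (cases "k = 0")
    case True
    then show ?thesis using k line by simp
  next
    case False
    have "z + (- (b / k)) *s u = (- inverse k) *s (b *s u - k *s z)"
      using False by (simp add: algebra_simps divide_inverse)
    also have "\<dots> \<in> N" using assms(1) k by (rule subspace_scale)
    finally have "- (b / k) = 0" by (rule shifted)
    then show ?thesis using False by simp
  qed
qed

end

definition nonvanishing_section ::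
    "('p::order \<Rightarrow> 'v::zero set) \<Rightarrow> ('p \<Rightarrow> 'p \<Rightarrow> 'v \<Rightarrow> 'v) \<Rightarrow> ('p \<Rightarrow> 'v) \<Rightarrow> bool" where
  "nonvanishing_section V f x \<longleftrightarrow>
     (\<forall>p. x p \<in> V p \<and> x p \<noteq> 0) \<and> (\<forall>p q. p \<le> q \<longrightarrow> f p q (x p) = x q)"

definition meets_section_trivially ::
    "('k::zero \<Rightarrow> 'v \<Rightarrow> 'v) \<Rightarrow> ('p \<Rightarrow> 'v) \<Rightarrow> ('p \<Rightarrow> 'v set) \<Rightarrow> bool" where
  "meets_section_trivially s x N \<longleftrightarrow> (\<forall>p b. s b (x p) \<in> N p \<longrightarrow> b = 0)"

locale persistence_module =
  fixes s :: "'k::field \<Rightarrow> 'v::ab_group_add \<Rightarrow> 'v" and V :: "'p::order \<Rightarrow> 'v set"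
    and f :: "'p \<Rightarrow> 'p \<Rightarrow> 'v \<Rightarrow> 'v"
  assumes pmod: "pmod s V f"
begin

sublocale vector_space s
  using pmod by (simp add: pmod_def)

lemma subspace_V: "subspace (V p)"
  using pmod by (simp add: pmod_def)

lemma f_lin_on: "p \<le> q \<Longrightarrow> lin_on s s (V p) (f p q)"
  using pmod by (simp add: pmod_def)

lemma f_in_V: "p \<le> q \<Longrightarrow> y \<in> V p \<Longrightarrow> f p q y \<in> V q"
  using pmod unfolding pmod_def by blast

lemma f_refl: "y \<in> V p \<Longrightarrow> f p p y = y"
  using pmod by (simp add: pmod_def)

lemma f_trans: "p \<le> q \<Longrightarrow> q \<le> r \<Longrightarrow> y \<in> V p \<Longrightarrow> f q r (f p q y) = f p r y"
  using pmod by (simp add: pmod_def)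

lemma f_add: "p \<le> q \<Longrightarrow> y \<in> V p \<Longrightarrow> z \<in> V p \<Longrightarrow> f p q (y + z) = f p q y + f p q z"
  using f_lin_on unfolding lin_on_def by blast

lemma f_scale: "p \<le> q \<Longrightarrow> y \<in> V p \<Longrightarrow> f p q (s c y) = s c (f p q y)"
  using f_lin_on unfolding lin_on_def by blast

lemma f_zero: "p \<le> q \<Longrightarrow> f p q 0 = 0"
  using lin_on_zero[OF f_lin_on subspace_0[OF subspace_V]] .

lemma f_image_span:
  assumes "p \<le> q" and "S \<subseteq> V p"
  shows "f p q ` span S = span (f p q ` S)"
proof -
  obtain g where g: "Vector_Spaces.linear s s g" and gf: "\<And>y. y \<in> V p \<Longrightarrow> g y = f p q y"
    using lin_on_extends_to_linear[OF subspace_V f_lin_on[OF assms(1)]] by blast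
  interpret g: linear s s g by (fact g)
  have "span S \<subseteq> V p" using assms(2) subspace_V by (rule span_minimal)
  then have "f p q ` span S = g ` span S" by (intro image_cong[OF refl]) (auto simp: gf)
  also have "\<dots> = span (g ` S)" by (rule g.span_image[symmetric])
  also have "g ` S = f p q ` S" using assms(2) by (intro image_cong[OF refl]) (auto simp: gf)
  finally show ?thesis .
qed

lemma psubmodI:
  assumes "\<And>p. subspace (N p)" and "\<And>p. N p \<subseteq> V p"
    and "\<And>p q y. p \<le> q \<Longrightarrow> y \<in> N p \<Longrightarrow> f p q y \<in> N q"
  shows "psubmod s V f N"
  unfolding psubmod_def using assms by blast

lemma psubmodD:
  assumes "psubmod s V f N"
  shows "subspace (N p)" and "N p \<subseteq> V p" and "p \<le> q \<Longrightarrow> y \<in> N p \<Longrightarrow> f p q y \<in> N q"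
  using assms unfolding psubmod_def by blast+

lemma compatible_family_extends:
  assumes "codirected TYPE('p)" and g_V: "\<And>c. c \<le> p0 \<Longrightarrow> g c \<in> V c"
    and g_compat: "\<And>d c. d \<le> c \<Longrightarrow> c \<le> p0 \<Longrightarrow> f d c (g d) = g c"
  shows "\<exists>x. (\<forall>p. x p \<in> V p) \<and> (\<forall>p q. p \<le> q \<longrightarrow> f p q (x p) = x q) \<and> (\<forall>c. c \<le> p0 \<longrightarrow> x c = g c)"
proof -
  have lower: "\<exists>c. c \<le> p \<and> c \<le> q" for p q :: 'p
    using assms(1) by (simp add: codirected_def)
  have transport: "f c p (g c) = f c' p (g c')"
    if "c \<le> p" "c \<le> p0" "c' \<le> p" "c' \<le> p0" for c c' p
  proof -
    obtain d where d: "d \<le> c" "d \<le> c'" using lower by blast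
    have d0: "d \<le> p0" using d(1) that(2) by (rule order_trans)
    have "f c p (g c) = f d p (g d)"
      using g_compat[OF d(1) that(2)] f_trans[OF d(1) that(1) g_V[OF d0]] by simp
    moreover have "f c' p (g c') = f d p (g d)"
      using g_compat[OF d(2) that(4)] f_trans[OF d(2) that(3) g_V[OF d0]] by simp
    ultimately show ?thesis by simp
  qed
  define low where "low p = (SOME c. c \<le> p \<and> c \<le> p0)" for p
  have low: "low p \<le> p" "low p \<le> p0" for p
    using someI_ex[OF lower[of p p0]] unfolding low_def by auto
  define x where "x p = f (low p) p (g (low p))" for p
  have "x p \<in> V p" for p unfolding x_def using low(1) g_V[OF low(2)] by (rule f_in_V)
  moreover have "f p q (x p) = x q" if "p \<le> q" for p q
  proof -
    have "f p q (x p) = f (low p) q (g (low p))"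
      unfolding x_def using low(1) that g_V[OF low(2)] by (rule f_trans)
    also have "\<dots> = x q"
      unfolding x_def using order_trans[OF low(1) that] low(2) low by (rule transport)
    finally show ?thesis .
  qed
  moreover have "x c = g c" if "c \<le> p0" for c
    unfolding x_def using g_compat[OF low(1) that] .
  ultimately show ?thesis by blast
qed

lemma nonvanishing_section_from_stable_point:
  assumes "codirected TYPE('p)" and inj: "\<And>p q. p \<le> q \<Longrightarrow> inj_on (f p q) (V p)"
    and onto: "\<And>c. c \<le> p0 \<Longrightarrow> f c p0 ` V c = V p0"
    and v: "v \<in> V p0" "v \<noteq> 0"
  shows "\<exists>x. nonvanishing_section V f x"
proof -
  define g where "g c = the_inv_into (V c) (f c p0) v" for c
  have g: "g c \<in> V c" "f c p0 (g c) = v" if "c \<le> p0" for c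
    using the_inv_into_into[OF inj[OF that]] f_the_inv_into_f[OF inj[OF that]] onto[OF that] v(1)
    unfolding g_def by auto
  have g_compat: "f d c (g d) = g c" if "d \<le> c" "c \<le> p0" for c d
  proof -
    have d: "d \<le> p0" using that by (rule order_trans)
    have "f c p0 (f d c (g d)) = f d p0 (g d)" using that g(1)[OF d] by (rule f_trans)
    also have "\<dots> = f c p0 (g c)" using g(2)[OF d] g(2)[OF that(2)] by simp
    finally show ?thesis
      using inj_onD[OF inj[OF that(2)]] f_in_V[OF that(1) g(1)[OF d]] g(1)[OF that(2)] by blast
  qed
  have "\<exists>x. (\<forall>p. x p \<in> V p) \<and> (\<forall>p q. p \<le> q \<longrightarrow> f p q (x p) = x q) \<and> (\<forall>c. c \<le> p0 \<longrightarrow> x c = g c)"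
    using assms(1) g(1) g_compat by (rule compatible_family_extends)
  then obtain x where x_V: "\<forall>p. x p \<in> V p" and x_compat: "\<forall>p q. p \<le> q \<longrightarrow> f p q (x p) = x q"
    and x_g: "\<forall>c. c \<le> p0 \<longrightarrow> x c = g c"
    by blast
  have "x p \<noteq> 0" for p
  proof
    assume "x p = 0"
    obtain c where c: "c \<le> p" "c \<le> p0" using assms(1) by (auto simp: codirected_def)
    have "f c p (x c) = f c p 0" using x_compat c(1) \<open>x p = 0\<close> f_zero[OF c(1)] by simp
    then have "x c = 0"
      using inj_onD[OF inj[OF c(1)]] x_V subspace_0[OF subspace_V] by blast
    then show False using x_g g(2)[OF c(2)] f_zero[OF c(2)] v(2) c(2) by simp
  qed
  then show ?thesis using x_V x_compat unfolding nonvanishing_section_def by blast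
qed

lemma nonvanishing_section_exists:
  assumes "codirected TYPE('p)" and "pfd s V" and "\<And>p. V p \<noteq> {0}"
    and inj: "\<And>p q. p \<le> q \<Longrightarrow> inj_on (f p q) (V p)"
  shows "\<exists>x. nonvanishing_section V f x"
proof -
  obtain p0 where p0: "\<And>p. dim (V p0) \<le> dim (V p)"
    using ex_has_least_nat[of "\<lambda>_. True" undefined "\<lambda>p. dim (V p)"] by blast
  obtain F where F: "finite F" "span F = V p0"
    using assms(2) unfolding pfd_def by blast
  have "f c p0 ` V c = V p0" if "c \<le> p0" for c
  proof (rule lin_on_inj_imp_surj)
    show "f c p0 ` V c \<subseteq> V p0" using f_in_V[OF that] by blast
  qed (use subspace_V f_lin_on inj that p0 F in auto)
  moreover obtain v where "v \<in> V p0" "v \<noteq> 0"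
    using assms(3) subspace_0[OF subspace_V] by blast
  ultimately show ?thesis using nonvanishing_section_from_stable_point assms(1) inj by blast
qed

lemma psubmod_extend:
  assumes N: "psubmod s V f N" and y: "y \<in> V p"
  shows "psubmod s V f (\<lambda>q. if p \<le> q then span (insert (f p q y) (N q)) else N q)"
proof -
  have N_f: "f q r ` N q \<subseteq> N r" if "q \<le> r" for q r
    using psubmodD(3)[OF N that] by blast
  have gen_V: "insert (f p q y) (N q) \<subseteq> V q" if "p \<le> q" for q
    using f_in_V[OF that y] psubmodD(2)[OF N] by blast
  have span_V: "span (insert (f p q y) (N q)) \<subseteq> V q" if "p \<le> q" for q
    using gen_V[OF that] subspace_V by (rule span_minimal)
  have "f q r ` span (insert (f p q y) (N q)) \<subseteq> span (insert (f p r y) (N r))"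
    if "p \<le> q" "q \<le> r" for q r
  proof -
    have "f q r ` span (insert (f p q y) (N q)) = span (insert (f p r y) (f q r ` N q))"
      using f_image_span[OF that(2) gen_V[OF that(1)]] f_trans[OF that y] by simp
    also have "\<dots> \<subseteq> span (insert (f p r y) (N r))"
      using N_f[OF that(2)] by (intro span_mono) blast
    finally show ?thesis .
  qed
  moreover have "f q r ` N q \<subseteq> span (insert (f p r y) (N r))" if "q \<le> r" for q r
    using N_f[OF that] span_superset by blast
  ultimately show ?thesis
    unfolding psubmod_def
    using psubmodD(1,2)[OF N] N_f span_V order_trans by auto
qed

lemma psubmod_chain_Union:
  assumes "C \<noteq> {}" and psub: "\<And>G. G \<in> C \<Longrightarrow> psubmod s V f (\<lambda>p. G `` {p})"
    and chain: "\<And>G H. G \<in> C \<Longrightarrow> H \<in> C \<Longrightarrow> G \<subseteq> H \<or> H \<subseteq> G"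
  shows "psubmod s V f (\<lambda>p. (\<Union>C) `` {p})"
proof (rule psubmodI)
  have fibre: "(\<Union>C) `` {p} = \<Union>((\<lambda>G. G `` {p}) ` C)" for p by blast
  fix p
  show "subspace ((\<Union>C) `` {p})"
    unfolding fibre
  proof (rule subspace_chain_Union)
    show "(\<lambda>G. G `` {p}) ` C \<noteq> {}" using assms(1) by blast
    show "subspace S" if "S \<in> (\<lambda>G. G `` {p}) ` C" for S
      using that psubmodD(1)[OF psub] by blast
    show "S \<subseteq> T \<or> T \<subseteq> S" if "S \<in> (\<lambda>G. G `` {p}) ` C" "T \<in> (\<lambda>G. G `` {p}) ` C" for S T
      using that chain by blast
  qed
  show "(\<Union>C) `` {p} \<subseteq> V p"
    using psubmodD(2)[OF psub] by blast
next
  fix p q y assume "p \<le> q" "y \<in> (\<Union>C) `` {p}"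
  then show "f p q y \<in> (\<Union>C) `` {q}"
    using psubmodD(3)[OF psub] by blast
qed

context
  fixes x assumes x: "nonvanishing_section V f x"
begin

lemma section_in_V: "x p \<in> V p"
  and section_nonzero: "x p \<noteq> 0"
  and section_compat: "p \<le> q \<Longrightarrow> f p q (x p) = x q"
  using x unfolding nonvanishing_section_def by blast+

lemma pmono_section: "pmono (*) kP_space kP_map s V f (\<lambda>p a. s a (x p))"
  unfolding pmono_def pmor_def lin_on_def kP_space_def kP_map_def
  using section_in_V section_nonzero section_compat
  by (auto simp: scale_left_distrib subspace_scale[OF subspace_V] f_scale inj_on_def)

lemma psubmod_section_span: "psubmod s V f (\<lambda>p. range (\<lambda>a. s a (x p)))"
proof -
  have "subspace (range (\<lambda>a. s a (x p)))" for p
    using subspace_span[of "{x p}"] by (simp add: span_singleton)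
  then show ?thesis
    unfolding psubmod_def using section_in_V section_compat
    by (auto simp: subspace_scale[OF subspace_V] f_scale)
qed

lemma piso_section_span:
  "piso (*) kP_space kP_map s (\<lambda>p. range (\<lambda>a. s a (x p))) f (\<lambda>p a. s a (x p))"
  unfolding piso_def pmor_def lin_on_def kP_space_def kP_map_def bij_betw_def
  using section_in_V section_nonzero section_compat
  by (auto simp: scale_left_distrib f_scale inj_on_def)

lemma section_coefficient_unique:
  assumes "directed TYPE('p)" and N: "psubmod s V f N"
    and avoid: "meets_section_trivially s x N" and y: "y \<in> V p"
    and "p \<le> q1" "f p q1 y + s b1 (x q1) \<in> N q1"
    and "p \<le> q2" "f p q2 y + s b2 (x q2) \<in> N q2"
  shows "b1 = b2"
proof -
  have transport: "f p r y + s b (x r) \<in> N r"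
    if "p \<le> q" "q \<le> r" "f p q y + s b (x q) \<in> N q" for q r b
  proof -
    have "f q r (f p q y + s b (x q)) = f p r y + s b (x r)"
      using f_add[OF that(2) f_in_V[OF that(1) y] subspace_scale[OF subspace_V section_in_V]]
        f_trans[OF that(1,2) y] f_scale[OF that(2) section_in_V] section_compat[OF that(2)]
      by simp
    then show ?thesis using psubmodD(3)[OF N that(2,3)] by simp
  qed
  obtain r where r: "q1 \<le> r" "q2 \<le> r" using assms(1) unfolding directed_def by blast
  have "(f p r y + s b1 (x r)) - (f p r y + s b2 (x r)) \<in> N r"
    using psubmodD(1)[OF N] transport[OF assms(5) r(1) assms(6)] transport[OF assms(7) r(2) assms(8)]
    by (rule subspace_diff)
  then have "s (b1 - b2) (x r) \<in> N r" by (simp add: scale_left_diff_distrib)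
  then show ?thesis using avoid unfolding meets_section_trivially_def by fastforce
qed

lemma shift_avoiding_section:
  assumes "directed TYPE('p)" and N: "psubmod s V f N"
    and avoid: "meets_section_trivially s x N" and y: "y \<in> V p"
  obtains b0 where "\<And>q b. p \<le> q \<Longrightarrow> f p q (y + s b0 (x p)) + s b (x q) \<in> N q \<Longrightarrow> b = 0"
proof -
  have shift: "f p q (y + s b0 (x p)) + s b (x q) = f p q y + s (b0 + b) (x q)"
    if "p \<le> q" for q b0 b
    using f_add[OF that y subspace_scale[OF subspace_V section_in_V]]
      f_scale[OF that section_in_V] section_compat[OF that]
    by (simp add: scale_left_distrib add.assoc)
  show thesis
  proof (cases "\<exists>q b. p \<le> q \<and> f p q y + s b (x q) \<in> N q")
    case True
    then obtain q1 b1 where b1: "p \<le> q1" "f p q1 y + s b1 (x q1) \<in> N q1" by blast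
    show thesis
    proof (rule that[of b1])
      fix q b assume "p \<le> q" "f p q (y + s b1 (x p)) + s b (x q) \<in> N q"
      then have "f p q y + s (b1 + b) (x q) \<in> N q" using shift by simp
      then have "b1 + b = b1"
        using section_coefficient_unique[OF assms] b1 \<open>p \<le> q\<close> by blast
      then show "b = 0" by simp
    qed
  next
    case False
    then show thesis using shift by (intro that[of 0]) auto
  qed
qed

lemma maximal_psubmod_meeting_section_trivially:
  obtains N where "psubmod s V f N" and "meets_section_trivially s x N"
    and "\<And>N'. psubmod s V f N' \<Longrightarrow> meets_section_trivially s x N' \<Longrightarrow> N \<le> N' \<Longrightarrow> N' = N"
proof -
  \<comment> \<open>Submodules are compared through their graphs in \<open>P \<times> M\<close>, so that Zorn's lemma for sets applies.\<close>
  let ?A = "{G. psubmod s V f (\<lambda>p. G `` {p}) \<and> meets_section_trivially s x (\<lambda>p. G `` {p})}"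
  have zero: "(UNIV \<times> {0}) `` {p} = {0}" for p by blast
  have "psubmod s V f (\<lambda>p. (UNIV \<times> {0}) `` {p})"
    unfolding zero by (rule psubmodI) (use subspace_0[OF subspace_V] f_zero in auto)
  then have zero_in: "UNIV \<times> {0} \<in> ?A"
    using section_nonzero by (simp add: zero meets_section_trivially_def)
  have chain_in: "\<Union>C \<in> ?A" if C: "C \<noteq> {}" "subset.chain ?A C" for C
  proof -
    have "psubmod s V f (\<lambda>p. (\<Union>C) `` {p})"
      using C unfolding subset_chain_def by (intro psubmod_chain_Union) auto
    moreover have "meets_section_trivially s x (\<lambda>p. (\<Union>C) `` {p})"
      using C(2) unfolding subset_chain_def meets_section_trivially_def by blast
    ultimately show ?thesis by blast
  qed
  have "?A \<noteq> {}" using zero_in by blast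
  then have "\<exists>M\<in>?A. \<forall>G\<in>?A. M \<subseteq> G \<longrightarrow> G = M"
    using chain_in by (rule subset_Zorn_nonempty)
  then obtain M where M: "M \<in> ?A" and max: "\<forall>G\<in>?A. M \<subseteq> G \<longrightarrow> G = M" ..
  show thesis
  proof (rule that[of "\<lambda>p. M `` {p}"])
    fix N' assume N': "psubmod s V f N'" "meets_section_trivially s x N'"
      and ext: "(\<lambda>p. M `` {p}) \<le> N'"
    have fibre: "Sigma UNIV N' `` {p} = N' p" for p by blast
    have "Sigma UNIV N' \<in> ?A" using N' by (simp add: fibre)
    moreover have "M \<subseteq> Sigma UNIV N'"
    proof (rule subrelI)
      fix p y assume "(p, y) \<in> M"
      then show "(p, y) \<in> Sigma UNIV N'" using ext by (auto simp: le_fun_def)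
    qed
    ultimately have "Sigma UNIV N' = M" using max by blast
    then show "N' = (\<lambda>p. M `` {p})" by auto
  qed (use M in auto)
qed

lemma maximal_psubmod_spans_with_section:
  assumes dir: "directed TYPE('p)" and N: "psubmod s V f N"
    and avoid: "meets_section_trivially s x N"
    and max: "\<And>N'. psubmod s V f N' \<Longrightarrow> meets_section_trivially s x N' \<Longrightarrow> N \<le> N' \<Longrightarrow> N' = N"
    and y: "y \<in> V p"
  shows "\<exists>a. y - s a (x p) \<in> N p"
proof -
  have avoid': "b = 0" if "s b (x q) \<in> N q" for b q
    using avoid that unfolding meets_section_trivially_def by blast
  obtain b0 where b0: "\<And>q b. p \<le> q \<Longrightarrow> f p q (y + s b0 (x p)) + s b (x q) \<in> N q \<Longrightarrow> b = 0"
    using shift_avoiding_section[OF dir N avoid y] by blast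
  define y' where "y' = y + s b0 (x p)"
  have y': "y' \<in> V p"
    unfolding y'_def using subspace_V y subspace_scale[OF subspace_V section_in_V] by (rule subspace_add)
  define N' where "N' q = (if p \<le> q then span (insert (f p q y') (N q)) else N q)" for q
  have "N' = N"
  proof (rule max)
    show "psubmod s V f N'" unfolding N'_def using N y' by (rule psubmod_extend)
    show "N \<le> N'" unfolding N'_def le_fun_def by (auto intro: span_base)
    show "meets_section_trivially s x N'"
      unfolding meets_section_trivially_def
    proof (intro allI impI)
      fix q b assume b: "s b (x q) \<in> N' q"
      show "b = 0"
      proof (cases "p \<le> q")
        case True
        show ?thesis
        proof (rule span_insert_meets_line_trivially)
          show "subspace (N q)" using N by (rule psubmodD)
          show "s b (x q) \<in> span (insert (f p q y') (N q))" using b True unfolding N'_def by simp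
        qed (use avoid' b0[OF True] in \<open>auto simp: y'_def\<close>)
      next
        case False
        then show ?thesis using b avoid' unfolding N'_def by simp
      qed
    qed
  qed
  moreover have "y' \<in> N' p" unfolding N'_def using f_refl[OF y'] span_base by simp
  ultimately have "y - s (- b0) (x p) \<in> N p" by (simp add: y'_def)
  then show ?thesis ..
qed

lemma pdirect_summand_section_span:
  assumes dir: "directed TYPE('p)"
  shows "pdirect_summand s V f (\<lambda>p. range (\<lambda>a. s a (x p)))"
proof -
  obtain N where N: "psubmod s V f N" and avoid: "meets_section_trivially s x N"
    and max: "\<And>N'. psubmod s V f N' \<Longrightarrow> meets_section_trivially s x N' \<Longrightarrow> N \<le> N' \<Longrightarrow> N' = N"
    using maximal_psubmod_meeting_section_trivially by blast
  have avoid': "b = 0" if "s b (x p) \<in> N p" for b p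
    using avoid that unfolding meets_section_trivially_def by blast
  have line_V: "s a (x p) \<in> V p" for a p
    using subspace_V section_in_V by (rule subspace_scale)
  have spanned: "\<exists>a. y - s a (x p) \<in> N p" if "y \<in> V p" for p y
    using dir N avoid max that by (rule maximal_psubmod_spans_with_section)
  show ?thesis
    unfolding pdirect_summand_def
  proof (intro conjI exI[of _ N] allI)
    fix p
    show "range (\<lambda>a. s a (x p)) \<inter> N p = {0}"
      using avoid'[of _ p] subspace_0[OF psubmodD(1)[OF N]] scale_zero_left by force
    show "{u + w |u w. u \<in> range (\<lambda>a. s a (x p)) \<and> w \<in> N p} = V p"
    proof
      show "{u + w |u w. u \<in> range (\<lambda>a. s a (x p)) \<and> w \<in> N p} \<subseteq> V p"
        using line_V psubmodD(2)[OF N] subspace_add[OF subspace_V] by blast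
      show "V p \<subseteq> {u + w |u w. u \<in> range (\<lambda>a. s a (x p)) \<and> w \<in> N p}"
      proof
        fix y assume "y \<in> V p"
        then obtain a where "y - s a (x p) \<in> N p" using spanned by blast
        then show "y \<in> {u + w |u w. u \<in> range (\<lambda>a. s a (x p)) \<and> w \<in> N p}"
          by (intro CollectI exI[of _ "s a (x p)"] exI[of _ "y - s a (x p)"]) auto
      qed
    qed
  qed (fact psubmod_section_span N)+
qed

end

end

theorem lemma2p2:
  fixes s :: "'k::field \<Rightarrow> 'v::ab_group_add \<Rightarrow> 'v"
    and V :: "'p::order \<Rightarrow> 'v set"
    and f :: "'p \<Rightarrow> 'p \<Rightarrow> 'v \<Rightarrow> 'v"
  assumes "codirected TYPE('p)"
    and "pmod s V f"
    and "pfd s V"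
    and "\<forall>p. V p \<noteq> {0}"
    and "\<forall>p q. p \<le> q \<longrightarrow> inj_on (f p q) (V p)"
  shows "(\<exists>\<eta>. pmono (*) kP_space kP_map s V f \<eta>)
    \<and> (directed TYPE('p) \<longrightarrow>
         (\<exists>L. pdirect_summand s V f L \<and> (\<exists>\<eta>. piso (*) kP_space kP_map s L f \<eta>)))"
proof -
  interpret persistence_module s V f using assms(2) by (rule persistence_module.intro)
  have "\<exists>x. nonvanishing_section V f x"
    using assms(1,3) by (rule nonvanishing_section_exists) (use assms(4,5) in auto)
  then obtain x where x: "nonvanishing_section V f x" ..
  show ?thesis
    using pmono_section[OF x] piso_section_span[OF x] pdirect_summand_section_span[OF x] by blast
qed

end
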